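(* Fix $\theta>0$ and consider the Feller coupling with parameter $\theta$. Then, as $n\to\infty$, \[\mathbb{E}\left\{\sup_{0\le t\le1}\left|\log\mathsf{invol}_{\lfloor n^t\rfloor}(C^{(n)})-\log\mathsf{B}_{\lfloor n^t\rfloor}(Z_0)\right|\right\}=O(\log n).\]
   Context: Feller coupling: $\beta_1,\beta_2,\ldots$ are independent Bernoulli random variables with $\Pr(\beta_j=1)=\theta/(\theta+j-1)$. A $k$-spacing occurs in a $0/1$ sequence starting at position $\ell-k$ and ending at $\ell$ if the entries at positions $\ell-k$ and $\ell$ are $1$ and all entries strictly between are $0$. $C^{(n)}=(c^{(n)}_1,c^{(n)}_2,\ldots)$ with $c^{(n)}_k$ the number of $k$-spacings in $1\beta_2\cdots\beta_n1$ (this has the law of the cycle counts of an ESF$(\theta)$ permutation of $[n]$), and $Z_0=(Z_{1,0},Z_{2,0},\ldots)$ with $Z_{k,0}$ the number of $k$-spacings in $\beta_1\beta_2\cdots$. For a sequence $a$ of nonnegative integers and $m\ge1$: $\mathsf{B}_m(a)=\prod_{k=1}^m k^{a_k}$ and $\mathsf{invol}_m(a)=\mathsf{B}_m(a)\prod_{k=1}^m\sum_{j=0}^{\lfloor a_k/2\rfloor}\frac{(a_k)_{2j}}{(2k)^j j!}$, with $(x)_r=x(x-1)\cdots(x-r+1)$. *)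

theory Defs
  imports "HOL-Probability.Probability"
begin

definition spacings :: "(nat \<Rightarrow> bool) \<Rightarrow> nat \<Rightarrow> nat" where
  "spacings x k = card {l. 1 \<le> k \<and> k \<le> l \<and> x (l - k) \<and> x l \<and> (\<forall>i. l - k < i \<and> i < l \<longrightarrow> \<not> x i)}"

text \<open>The finite word 1 b_2 ... b_n 1 placed on positions 1..n+1 (all other positions 0).\<close>
definition feller_word :: "(nat \<Rightarrow> bool) \<Rightarrow> nat \<Rightarrow> nat \<Rightarrow> bool" where
  "feller_word b n j = (j = 1 \<or> j = n + 1 \<or> (2 \<le> j \<and> j \<le> n \<and> b j))"

text \<open>Cycle count vector C^(n): C^(n)_k = number of k-spacings in 1 b_2 ... b_n 1.\<close>
definition cyc_counts :: "(nat \<Rightarrow> bool) \<Rightarrow> nat \<Rightarrow> nat \<Rightarrow> nat" where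
  "cyc_counts b n k = spacings (feller_word b n) k"

text \<open>Z_0: Z_{k,0} = number of k-spacings in the infinite word b_1 b_2 ... (positions 1,2,...).\<close>
definition Z0 :: "(nat \<Rightarrow> bool) \<Rightarrow> nat \<Rightarrow> nat" where
  "Z0 b k = spacings (\<lambda>j. 1 \<le> j \<and> b j) k"

definition falling :: "nat \<Rightarrow> nat \<Rightarrow> real" where
  "falling x r = (\<Prod>i<r. (real x - real i))"

definition Bm :: "nat \<Rightarrow> (nat \<Rightarrow> nat) \<Rightarrow> real" where
  "Bm m a = (\<Prod>k=1..m. real k ^ a k)"

definition invol :: "nat \<Rightarrow> (nat \<Rightarrow> nat) \<Rightarrow> real" where
  "invol m a = Bm m a * (\<Prod>k=1..m. \<Sum>j=0..a k div 2.
      falling (a k) (2 * j) / ((2 * real k) ^ j * fact j))"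

end

(* Write invol_m(a) = B_m(a) * prod_{k<=m} invol_factor k (a_k), where
   1 <= invol_factor k a <= exp (a (a - 1) / (2 k)).
   For m <= n this bounds the log-ratio by
     ln n * sum_{k<=n} |C_k - Z_k| + sum_{k<=n} C_k (C_k - 1) / (2 k),
   uniformly in m, so the supremum over t costs nothing.  Almost surely beta_1 = 1, and then
   the finite and the infinite Feller word agree up to position n: the C_k and Z_k differ only
   by the spacing ending at n + 1 and by the spacings ending beyond n, while C_k (C_k - 1) / 2
   counts pairs of k-spacings, each of which forces ones at three positions l - k, l, l' - k.
   As Pr(beta_j = 1) <= max 1 theta / j and the beta_j are independent, the expected number of
   spacings ending beyond n is O(1) and the expected pair term is O(H_n) = O(log n). *)

theory Submission
  imports Defs "HOL-Analysis.Harmonic_Numbers" "HOL-Real_Asymp.Real_Asymp"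
begin

section \<open>The involution factor\<close>

definition invol_factor :: "nat \<Rightarrow> nat \<Rightarrow> real" where
  "invol_factor k a = (\<Sum>j=0..a div 2. falling a (2 * j) / ((2 * real k) ^ j * fact j))"

lemma invol_eq_Bm_mult_invol_factor: "invol m a = Bm m a * (\<Prod>k=1..m. invol_factor k (a k))"
  unfolding invol_def invol_factor_def ..

lemma falling_nonneg: "r \<le> a \<Longrightarrow> 0 \<le> falling a r"
  unfolding falling_def by (intro prod_nonneg) auto

lemma falling_even_le: "2 * j \<le> a \<Longrightarrow> falling a (2 * j) \<le> (real a * (real a - 1)) ^ j"
proof (induction j)
  case 0
  then show ?case by (simp add: falling_def)
next
  case (Suc j)
  have "falling a (2 * Suc j) = falling a (2 * j) * ((real a - real (2 * j)) * (real a - real (2 * j + 1)))"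
    unfolding falling_def by (simp add: mult.assoc)
  also have "\<dots> \<le> (real a * (real a - 1)) ^ j * (real a * (real a - 1))"
  proof (rule mult_mono)
    show "(real a - real (2 * j)) * (real a - real (2 * j + 1)) \<le> real a * (real a - 1)"
      using Suc.prems by (intro mult_mono) auto
  qed (use Suc falling_nonneg[of "2 * j" a] in auto)
  finally show ?case by (simp add: mult.commute)
qed

lemma one_le_invol_factor: "1 \<le> invol_factor k a"
proof -
  have "invol_factor k a = 1 + (\<Sum>j=1..a div 2. falling a (2 * j) / ((2 * real k) ^ j * fact j))"
    unfolding invol_factor_def by (subst sum.atLeast_Suc_atMost) (auto simp: falling_def)
  also have "\<dots> \<ge> 1"
    by (intro add_increasing2 sum_nonneg divide_nonneg_nonneg falling_nonneg) auto
  finally show ?thesis .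
qed

lemma invol_factor_le_exp:
  assumes "1 \<le> k"
  shows "invol_factor k a \<le> exp (real a * (real a - 1) / (2 * real k))"
proof -
  define x where "x = real a * (real a - 1) / (2 * real k)"
  have "0 \<le> x" unfolding x_def using assms by (cases a) auto
  have "invol_factor k a \<le> (\<Sum>j\<le>a div 2. x ^ j / fact j)"
    unfolding invol_factor_def atLeast0AtMost
  proof (intro sum_mono)
    fix j assume "j \<in> {..a div 2}"
    then have "falling a (2 * j) / ((2 * real k) ^ j * fact j)
        \<le> (real a * (real a - 1)) ^ j / ((2 * real k) ^ j * fact j)"
      using assms by (intro divide_right_mono falling_even_le) auto
    also have "\<dots> = x ^ j / fact j"
      unfolding x_def by (simp add: power_divide)
    finally show "falling a (2 * j) / ((2 * real k) ^ j * fact j) \<le> x ^ j / fact j" .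
  qed
  also have "\<dots> \<le> (\<Sum>j. x ^ j / fact j)"
    using exp_converges[of x] \<open>0 \<le> x\<close>
    by (intro sum_le_suminf) (auto simp: sums_iff divide_inverse mult.commute scaleR_conv_of_real)
  also have "\<dots> = exp x"
    using exp_converges[of x] by (simp add: sums_iff divide_inverse mult.commute scaleR_conv_of_real)
  finally show ?thesis
    unfolding x_def .
qed

lemma ln_invol_factor_nonneg: "0 \<le> ln (invol_factor k a)"
  using one_le_invol_factor[of k a] by simp

lemma ln_invol_factor_le:
  assumes "1 \<le> k"
  shows "ln (invol_factor k a) \<le> real a * (real a - 1) / (2 * real k)"
proof -
  have "0 < invol_factor k a"
    using one_le_invol_factor[of k a] by linarith
  then have "ln (invol_factor k a) \<le> ln (exp (real a * (real a - 1) / (2 * real k)))"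
    using invol_factor_le_exp[OF assms] by (subst ln_le_cancel_iff) auto
  then show ?thesis
    by simp
qed

lemma ln_Bm: "ln (Bm m a) = (\<Sum>k=1..m. real (a k) * ln (real k))"
  unfolding Bm_def by (subst ln_prod) (auto simp: ln_realpow)

lemma ln_invol: "ln (invol m a) = ln (Bm m a) + (\<Sum>k=1..m. ln (invol_factor k (a k)))"
proof -
  have "invol_factor k (a k) \<noteq> 0" for k
    using one_le_invol_factor[of k "a k"] by linarith
  moreover have "0 < Bm m a"
    unfolding Bm_def by (intro prod_pos) auto
  ultimately show ?thesis
    unfolding invol_eq_Bm_mult_invol_factor by (simp add: ln_mult ln_prod)
qed

lemma abs_ln_invol_minus_ln_Bm_le:
  assumes "m \<le> n"
  shows "\<bar>ln (invol m a) - ln (Bm m c)\<bar>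
    \<le> ln (real n) * (\<Sum>k=1..n. \<bar>real (a k) - real (c k)\<bar>)
      + (\<Sum>k=1..n. real (a k) * (real (a k) - 1) / (2 * real k))"
proof -
  have ln_n: "0 \<le> ln (real n)"
    by (cases n) auto
  have pairs_nonneg: "0 \<le> real x * (real x - 1)" for x :: nat
    by (cases x) auto
  have ln_diff: "ln (invol m a) - ln (Bm m c)
      = (\<Sum>k=1..m. (real (a k) - real (c k)) * ln (real k)) + (\<Sum>k=1..m. ln (invol_factor k (a k)))"
    by (simp add: ln_invol ln_Bm sum_subtractf left_diff_distrib)
  have "\<bar>\<Sum>k=1..m. (real (a k) - real (c k)) * ln (real k)\<bar>
      \<le> (\<Sum>k=1..m. \<bar>real (a k) - real (c k)\<bar> * ln (real n))"
  proof (rule order_trans[OF sum_abs sum_mono])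
    fix k assume "k \<in> {1..m}"
    then have "\<bar>ln (real k)\<bar> \<le> ln (real n)"
      using assms by auto
    then show "\<bar>(real (a k) - real (c k)) * ln (real k)\<bar> \<le> \<bar>real (a k) - real (c k)\<bar> * ln (real n)"
      unfolding abs_mult by (intro mult_left_mono) auto
  qed
  also have "\<dots> \<le> (\<Sum>k=1..n. \<bar>real (a k) - real (c k)\<bar> * ln (real n))"
    using assms ln_n by (intro sum_mono2) auto
  finally have first: "\<bar>\<Sum>k=1..m. (real (a k) - real (c k)) * ln (real k)\<bar>
      \<le> ln (real n) * (\<Sum>k=1..n. \<bar>real (a k) - real (c k)\<bar>)"
    by (simp add: sum_distrib_left mult.commute)
  have "\<bar>\<Sum>k=1..m. ln (invol_factor k (a k))\<bar> = (\<Sum>k=1..m. ln (invol_factor k (a k)))"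
    by (intro abs_of_nonneg sum_nonneg ln_invol_factor_nonneg)
  also have "\<dots> \<le> (\<Sum>k=1..m. real (a k) * (real (a k) - 1) / (2 * real k))"
    by (intro sum_mono ln_invol_factor_le) auto
  also have "\<dots> \<le> (\<Sum>k=1..n. real (a k) * (real (a k) - 1) / (2 * real k))"
    using assms by (intro sum_mono2) (auto intro!: divide_nonneg_nonneg pairs_nonneg)
  finally have second: "\<bar>\<Sum>k=1..m. ln (invol_factor k (a k))\<bar>
      \<le> (\<Sum>k=1..n. real (a k) * (real (a k) - 1) / (2 * real k))" .
  show ?thesis
    unfolding ln_diff by (rule order_trans[OF abs_triangle_ineq add_mono[OF first second]])
qed

section \<open>Spacings of the Feller words\<close>

definition spacing_ends :: "(nat \<Rightarrow> bool) \<Rightarrow> nat \<Rightarrow> nat set" where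
  "spacing_ends x k = {l. 1 \<le> k \<and> k \<le> l \<and> x (l - k) \<and> x l \<and> (\<forall>i. l - k < i \<and> i < l \<longrightarrow> \<not> x i)}"

definition infinite_word :: "(nat \<Rightarrow> bool) \<Rightarrow> nat \<Rightarrow> bool" where
  "infinite_word b j \<longleftrightarrow> 1 \<le> j \<and> b j"

lemma cyc_counts_eq_card: "cyc_counts b n k = card (spacing_ends (feller_word b n) k)"
  unfolding cyc_counts_def spacings_def spacing_ends_def ..

lemma Z0_eq_card: "Z0 b k = card (spacing_ends (infinite_word b) k)"
  unfolding Z0_def spacings_def spacing_ends_def infinite_word_def ..

lemma spacing_ends_gap:
  "l \<in> spacing_ends x k \<Longrightarrow> l' \<in> spacing_ends x k \<Longrightarrow> l < l' \<Longrightarrow> l + k \<le> l'"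
  unfolding spacing_ends_def by (cases "l + k \<le> l'") auto

lemma spacing_ends_length_unique:
  assumes "l \<in> spacing_ends x k" "l \<in> spacing_ends x k'"
  shows "k = k'"
proof -
  have False if "l \<in> spacing_ends x i" "l \<in> spacing_ends x j" "i < j" for i j
  proof -
    from that have "x (l - i)" "\<forall>p. l - j < p \<and> p < l \<longrightarrow> \<not> x p" "l - j < l - i" "l - i < l"
      unfolding spacing_ends_def by auto
    then show False by blast
  qed
  then show ?thesis
    using assms by (cases k k' rule: linorder_cases) auto
qed

lemma sum_of_bool_mem_spacing_ends_le_1:
  assumes "finite K"
  shows "(\<Sum>k\<in>K. of_bool (l \<in> spacing_ends x k) :: ennreal) \<le> 1"
proof -
  have "card (K \<inter> {k. l \<in> spacing_ends x k}) \<le> Suc 0"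
    using assms by (subst card_le_Suc0_iff_eq) (auto dest: spacing_ends_length_unique)
  then show ?thesis
    using assms by simp
qed

lemma spacing_ends_cong:
  assumes "\<And>j. j \<le> l \<Longrightarrow> x j = y j"
  shows "l \<in> spacing_ends x k \<longleftrightarrow> l \<in> spacing_ends y k"
  using assms unfolding spacing_ends_def by auto

lemma feller_word_eq_infinite_word: "b 1 \<Longrightarrow> j \<le> n \<Longrightarrow> feller_word b n j = infinite_word b j"
  unfolding feller_word_def infinite_word_def by (cases "j = 1") auto

lemma spacing_ends_feller_word_iff:
  "b 1 \<Longrightarrow> l \<le> n \<Longrightarrow> l \<in> spacing_ends (feller_word b n) k \<longleftrightarrow> l \<in> spacing_ends (infinite_word b) k"
  by (intro spacing_ends_cong feller_word_eq_infinite_word) auto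

lemma spacing_ends_feller_word_subset: "spacing_ends (feller_word b n) k \<subseteq> {k + 1..n + 1}"
proof
  fix l assume "l \<in> spacing_ends (feller_word b n) k"
  then have "k \<le> l" "feller_word b n (l - k)" "feller_word b n l"
    unfolding spacing_ends_def by auto
  then show "l \<in> {k + 1..n + 1}"
    unfolding feller_word_def by auto
qed

text \<open>The spacings of the infinite word ending beyond \<open>n\<close> may be infinitely many, and then
  \<open>Z0 b k = 0\<close> by the convention for \<open>card\<close>; hence the bound is stated in the extended reals.\<close>
lemma ennreal_abs_cyc_counts_minus_Z0_le:
  assumes "b 1"
  shows "ennreal \<bar>real (cyc_counts b n k) - real (Z0 b k)\<bar>
    \<le> of_bool (n + 1 \<in> spacing_ends (feller_word b n) k)
      + (\<Sum>l. of_bool (n < l \<and> l \<in> spacing_ends (infinite_word b) k))"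
proof -
  define A where "A = spacing_ends (infinite_word b) k \<inter> {..n}"
  define X where "X = spacing_ends (feller_word b n) k \<inter> {n + 1}"
  define T where "T = spacing_ends (infinite_word b) k \<inter> {n<..}"
  have fw: "spacing_ends (feller_word b n) k = A \<union> X"
  proof (intro set_eqI)
    fix l
    show "l \<in> spacing_ends (feller_word b n) k \<longleftrightarrow> l \<in> A \<union> X"
      using spacing_ends_feller_word_iff[of b, OF assms, of l n k] spacing_ends_feller_word_subset[of b n k]
      unfolding A_def X_def by (cases "l \<le> n") auto
  qed
  have inf: "spacing_ends (infinite_word b) k = A \<union> T"
    unfolding A_def T_def by auto
  have card_X: "(of_nat (card X) :: ennreal) = of_bool (n + 1 \<in> spacing_ends (feller_word b n) k)"
    unfolding X_def by auto
  have tail: "(\<Sum>l. of_bool (n < l \<and> l \<in> spacing_ends (infinite_word b) k)) = emeasure (count_space UNIV) T"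
  proof -
    have "emeasure (count_space UNIV) T = (\<integral>\<^sup>+l. indicator T l \<partial>count_space UNIV)"
      by simp
    also have "\<dots> = (\<Sum>l. indicator T l)"
      by (rule nn_integral_count_space_nat)
    finally show ?thesis
      unfolding T_def by (simp add: indicator_def conj_commute)
  qed
  show ?thesis
  proof (cases "finite T")
    case False
    then show ?thesis
      unfolding tail by (simp add: emeasure_count_space)
  next
    case True
    have "card (A \<union> X) = card A + card X" "card (A \<union> T) = card A + card T"
      using True unfolding A_def X_def T_def by (auto intro!: card_Un_disjoint)
    then have "\<bar>real (cyc_counts b n k) - real (Z0 b k)\<bar> \<le> real (card X) + real (card T)"
      unfolding cyc_counts_eq_card Z0_eq_card fw inf by simp
    then have "ennreal \<bar>real (cyc_counts b n k) - real (Z0 b k)\<bar> \<le> ennreal (real (card X + card T))"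
      by (intro ennreal_leI) simp
    then show ?thesis
      unfolding tail card_X[symmetric] using True by (simp add: emeasure_count_space ennreal_of_nat_eq_real_of_nat)
  qed
qed

lemma sum_abs_cyc_counts_minus_Z0_le:
  assumes "b 1"
  shows "(\<Sum>k=1..n. ennreal \<bar>real (cyc_counts b n k) - real (Z0 b k)\<bar>)
    \<le> 1 + (\<Sum>k=1..n. \<Sum>l. of_bool (n < l) * of_bool (\<forall>j\<in>{l - k, l}. infinite_word b j))"
proof -
  have "(\<Sum>k=1..n. ennreal \<bar>real (cyc_counts b n k) - real (Z0 b k)\<bar>)
      \<le> (\<Sum>k=1..n. of_bool (n + 1 \<in> spacing_ends (feller_word b n) k))
        + (\<Sum>k=1..n. \<Sum>l. of_bool (n < l \<and> l \<in> spacing_ends (infinite_word b) k))"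
    unfolding sum.distrib[symmetric] by (intro sum_mono ennreal_abs_cyc_counts_minus_Z0_le[of b, OF assms])
  also have "\<dots> \<le> 1 + (\<Sum>k=1..n. \<Sum>l. of_bool (n < l) * of_bool (\<forall>j\<in>{l - k, l}. infinite_word b j))"
    by (intro add_mono sum_of_bool_mem_spacing_ends_le_1 sum_mono suminf_le summableI)
      (auto simp: spacing_ends_def)
  finally show ?thesis .
qed

lemma card_ordered_pairs:
  fixes S :: "'a::linorder set"
  assumes "finite S"
  shows "real (card S) * (real (card S) - 1) = 2 * real (card {p \<in> S \<times> S. fst p < snd p})"
proof -
  define P where "P = {p \<in> S \<times> S. fst p < snd p}"
  define D where "D = {p \<in> S \<times> S. fst p = snd p}"
  have square: "S \<times> S = D \<union> (P \<union> prod.swap ` P)"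
    unfolding D_def P_def by (auto simp: linorder_neq_iff image_iff)
  have "card D = card S"
  proof -
    have "D = (\<lambda>x. (x, x)) ` S"
      unfolding D_def by auto
    then show ?thesis
      by (simp add: card_image inj_on_def)
  qed
  moreover have "card (prod.swap ` P) = card P"
    by (simp add: card_image)
  moreover have "card (S \<times> S) = card D + (card P + card (prod.swap ` P))"
    unfolding square using assms
    by (subst card_Un_disjoint card_Un_disjoint; auto simp: D_def P_def)+
  ultimately have "card S * card S = card S + 2 * card P"
    by (simp add: card_cartesian_product)
  then have "real (card S) * real (card S) = real (card S) + 2 * real (card P)"
    by (metis of_nat_add of_nat_mult of_nat_numeral)
  then show ?thesis
    unfolding P_def[symmetric] by (simp add: algebra_simps)
qed

lemma card_spacing_end_pairs_le:
  fixes n k :: nat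
  assumes "b 1" "1 \<le> k"
  defines "E \<equiv> spacing_ends (feller_word b n) k"
  shows "card {p \<in> E \<times> E. fst p < snd p}
    \<le> (\<Sum>l=k+1..n. \<Sum>l'=l+k..n+1. of_bool (\<forall>j\<in>{l - k, l, l' - k}. infinite_word b j))"
proof -
  define Q where "Q = (SIGMA l:{k+1..n}. {l+k..n+1}) \<inter> {(l, l'). \<forall>j\<in>{l - k, l, l' - k}. infinite_word b j}"
  have "{p \<in> E \<times> E. fst p < snd p} \<subseteq> Q"
  proof
    fix p assume "p \<in> {p \<in> E \<times> E. fst p < snd p}"
    then obtain l l' where p: "p = (l, l')" "l \<in> E" "l' \<in> E" "l < l'"
      by auto
    have "l + k \<le> l'"
      using spacing_ends_gap p unfolding E_def by blast
    moreover have "l \<in> {k + 1..n + 1}" "l' \<in> {k + 1..n + 1}"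
      using p spacing_ends_feller_word_subset unfolding E_def by blast+
    moreover have "infinite_word b j" if "j \<in> {l - k, l, l' - k}" for j
    proof -
      have "j \<le> n"
        using that \<open>l + k \<le> l'\<close> \<open>l' \<in> {k + 1..n + 1}\<close> assms(2) by auto
      moreover have "feller_word b n j"
        using p that unfolding E_def spacing_ends_def by auto
      ultimately show ?thesis
        using feller_word_eq_infinite_word[of b, OF assms(1)] by simp
    qed
    ultimately show "p \<in> Q"
      unfolding Q_def p using assms(2) by auto
  qed
  then have "card {p \<in> E \<times> E. fst p < snd p} \<le> card Q"
    by (intro card_mono) (auto simp: Q_def)
  also have "card Q = (\<Sum>l=k+1..n. \<Sum>l'=l+k..n+1. of_bool (\<forall>j\<in>{l - k, l, l' - k}. infinite_word b j))"
    unfolding Q_def by (subst sum.Sigma) (auto simp: case_prod_beta')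
  finally show ?thesis .
qed

lemma ln_invol_cyc_counts_minus_ln_Bm_Z0_le:
  assumes "b 1" "m \<le> n"
  shows "ennreal \<bar>ln (invol m (cyc_counts b n)) - ln (Bm m (Z0 b))\<bar>
    \<le> ennreal (ln (real n)) * (1 + (\<Sum>k=1..n. \<Sum>l. of_bool (n < l) * of_bool (\<forall>j\<in>{l - k, l}. infinite_word b j)))
      + (\<Sum>k=1..n. ennreal (1 / real k)
          * (\<Sum>l=k+1..n. \<Sum>l'=l+k..n+1. of_bool (\<forall>j\<in>{l - k, l, l' - k}. infinite_word b j)))"
proof -
  define D where "D = (\<Sum>k=1..n. \<bar>real (cyc_counts b n k) - real (Z0 b k)\<bar>)"
  define P where "P k = real (cyc_counts b n k) * (real (cyc_counts b n k) - 1) / (2 * real k)" for k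
  define W where "W k = (\<Sum>l=k+1..n. \<Sum>l'=l+k..n+1. of_bool (\<forall>j\<in>{l - k, l, l' - k}. infinite_word b j) :: nat)" for k
  have ln_n: "0 \<le> ln (real n)"
    by (cases n) auto
  have P_eq: "P k = real (card {p \<in> spacing_ends (feller_word b n) k \<times> spacing_ends (feller_word b n) k. fst p < snd p}) / real k" for k
    unfolding P_def cyc_counts_eq_card
    by (subst card_ordered_pairs) (auto intro: finite_subset[OF spacing_ends_feller_word_subset])
  have D_nonneg: "0 \<le> D"
    unfolding D_def by (intro sum_nonneg) auto
  have P_nonneg: "0 \<le> P k" for k
    unfolding P_eq by simp
  have "ennreal \<bar>ln (invol m (cyc_counts b n)) - ln (Bm m (Z0 b))\<bar> \<le> ennreal (ln (real n) * D + (\<Sum>k=1..n. P k))"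
    using abs_ln_invol_minus_ln_Bm_le[OF assms(2)] unfolding D_def P_def by (intro ennreal_leI)
  also have "\<dots> = ennreal (ln (real n)) * ennreal D + (\<Sum>k=1..n. ennreal (P k))"
    using ln_n D_nonneg P_nonneg
    by (simp add: ennreal_plus ennreal_mult sum_nonneg sum_ennreal)
  also have "\<dots> = ennreal (ln (real n)) * (\<Sum>k=1..n. ennreal \<bar>real (cyc_counts b n k) - real (Z0 b k)\<bar>)
      + (\<Sum>k=1..n. ennreal (P k))"
    unfolding D_def by (simp add: sum_ennreal)
  also have "\<dots> \<le> ennreal (ln (real n)) * (1 + (\<Sum>k=1..n. \<Sum>l. of_bool (n < l) * of_bool (\<forall>j\<in>{l - k, l}. infinite_word b j)))
      + (\<Sum>k=1..n. ennreal (1 / real k) * of_nat (W k))"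
  proof (intro add_mono mult_left_mono sum_mono sum_abs_cyc_counts_minus_Z0_le[of b, OF assms(1)])
    fix k assume "k \<in> {1..n}"
    then have "P k \<le> real (W k) / real k"
      unfolding P_eq W_def
      by (intro divide_right_mono of_nat_mono card_spacing_end_pairs_le[of b, OF assms(1)]) auto
    then show "ennreal (P k) \<le> ennreal (1 / real k) * of_nat (W k)"
      by (simp add: ennreal_of_nat_eq_real_of_nat ennreal_mult[symmetric] ennreal_leI)
  qed auto
  finally show ?thesis
    unfolding W_def of_nat_sum of_nat_of_bool .
qed

section \<open>Harmonic sums\<close>

lemma harm_le_one_plus_ln:
  assumes "1 \<le> n"
  shows "harm n \<le> 1 + ln (real n)"
proof -
  have "harm 1 = (1 :: real)"
    by (simp add: harm_def)
  then show ?thesis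
    using euler_mascheroni_sequence_decreasing[of 1 n] assms by simp
qed

lemma harm_diff_eq_sum:
  assumes "m \<le> n"
  shows "harm n - harm m = (\<Sum>j=m+1..n. 1 / real j)"
proof -
  have "{1..n} = {1..m} \<union> {m+1..n}" "{1..m} \<inter> {m+1..n} = {}"
    using assms by auto
  then show ?thesis
    unfolding harm_def by (simp add: sum.union_disjoint inverse_eq_divide)
qed

lemma sum_harm_lessThan: "(\<Sum>j<n. harm j) = real n * harm n - real n"
proof (induction n)
  case 0
  then show ?case by simp
next
  case (Suc n)
  have "real (Suc n) * harm (Suc n) = real (Suc n) * harm n + 1"
    by (simp add: harm_Suc field_simps)
  with Suc.IH show ?case
    by (simp add: algebra_simps)
qed

lemma sum_harm_minus_harm_diff: "(\<Sum>k=1..n. harm n - harm (n - k)) = (real n :: real)"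
proof -
  have "(\<Sum>k=1..n. harm (n - k)) = (\<Sum>i<n. harm (n - Suc i) :: real)"
    using sum.atLeast1_atMost_eq[of "\<lambda>k. harm (n - k)" n] by simp
  also have "\<dots> = (\<Sum>j<n. harm j)"
    by (rule sum.nat_diff_reindex)
  finally have "(\<Sum>k=1..n. harm (n - k)) = (\<Sum>j<n. harm j :: real)" .
  then show ?thesis
    by (simp add: sum_subtractf sum_harm_lessThan)
qed

text \<open>For \<open>k \<le> n\<close> the terms with \<open>l \<le> n + k\<close> are bounded using \<open>l > n\<close>, the remaining
  ones by the telescoping \<open>1 / (l - k - 1) - 1 / (l - k)\<close>.\<close>
lemma suminf_tail_weights_le:
  assumes "1 \<le> k" "k \<le> n"
  shows "(\<Sum>l. ennreal (of_bool (n < l) / ((real l - real k) * real l)))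
    \<le> ennreal ((harm n - harm (n - k)) / (real n + 1) + 1 / real n)"
proof -
  define u where "u l = 1 / (real (max l (n + k + 1)) - real k - 1)" for l
  define near where "near l = of_bool (n < l \<and> l \<le> n + k) / ((real n + 1) * (real l - real k))" for l
  have "u \<longlonglongrightarrow> 0"
  proof (rule LIMSEQ_offset[where k = "n + k + 1"])
    have "u (l + (n + k + 1)) = 1 / (real l + real n)" for l
      unfolding u_def by (simp add: max_def)
    moreover have "(\<lambda>l. 1 / (real l + real n)) \<longlonglongrightarrow> 0"
      using assms by real_asymp
    ultimately show "(\<lambda>l. u (l + (n + k + 1))) \<longlonglongrightarrow> 0"
      by simp
  qed
  then have far: "(\<lambda>l. u l - u (Suc l)) sums (1 / real n)"
    using telescope_sums' by (fastforce simp: u_def)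
  have "near sums (\<Sum>l=n+1..n+k. near l)"
    by (rule sums_finite) (auto simp: near_def)
  also have "(\<Sum>l=n+1..n+k. near l) = (\<Sum>j=n-k+1..n. 1 / real j) / (real n + 1)"
  proof -
    have "(\<Sum>l=n+1..n+k. near l) = (\<Sum>l=(n-k+1)+k..n+k. 1 / (real l - real k)) / (real n + 1)"
      using assms unfolding near_def sum_divide_distrib by (intro sum.cong) auto
    also have "\<dots> = (\<Sum>j=n-k+1..n. 1 / real j) / (real n + 1)"
      by (subst sum.shift_bounds_cl_nat_ivl) simp
    finally show ?thesis .
  qed
  finally have near: "near sums ((harm n - harm (n - k)) / (real n + 1))"
    using harm_diff_eq_sum[of "n - k" n] by simp
  have u_step: "u l - u (Suc l) = (if n + k < l then 1 / ((real l - real k - 1) * (real l - real k)) else 0)" for l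
  proof (cases "n + k < l")
    case True
    then have u: "u l = 1 / (real l - real k - 1)" "u (Suc l) = 1 / (real l - real k)"
      unfolding u_def by (auto simp: max_def)
    have "real l - real k - 1 \<noteq> 0" "real l - real k \<noteq> 0"
      using True assms by auto
    then show ?thesis
      unfolding u using True by (simp add: field_simps)
  qed (simp add: u_def max_def)
  have near_nonneg: "0 \<le> near l" and far_nonneg: "0 \<le> u l - u (Suc l)" for l
    unfolding near_def u_step using assms by auto
  have "of_bool (n < l) / ((real l - real k) * real l) \<le> near l + (u l - u (Suc l))" for l
  proof (cases "n + k < l")
    case True
    have "(real l - real k) * (real l - real k - 1) \<le> (real l - real k) * real l"
      using True by (intro mult_left_mono) auto
    moreover have "0 < (real l - real k) * real l" "0 < (real l - real k - 1) * (real l - real k)"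
      using True assms by (auto intro!: mult_pos_pos)
    ultimately have "1 / ((real l - real k) * real l) \<le> 1 / ((real l - real k - 1) * (real l - real k))"
      by (intro divide_left_mono) (auto simp: mult.commute)
    then show ?thesis
      using True near_nonneg[of l] unfolding u_step by auto
  next
    case False
    then have "of_bool (n < l) / ((real l - real k) * real l) \<le> near l"
      using assms unfolding near_def by (auto intro!: divide_left_mono mult_right_mono)
    then show ?thesis
      using far_nonneg[of l] by linarith
  qed
  then have "(\<Sum>l. ennreal (of_bool (n < l) / ((real l - real k) * real l)))
      \<le> (\<Sum>l. ennreal (near l + (u l - u (Suc l))))"
    by (intro suminf_le summableI ennreal_leI)
  also have "\<dots> = ennreal (\<Sum>l. near l + (u l - u (Suc l)))"
    using near_nonneg far_nonneg sums_summable[OF sums_add[OF near far]]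
    by (intro suminf_ennreal2 add_nonneg_nonneg)
  also have "(\<Sum>l. near l + (u l - u (Suc l))) = (harm n - harm (n - k)) / (real n + 1) + 1 / real n"
    using sums_unique[OF sums_add[OF near far]] by simp
  finally show ?thesis .
qed

lemma sum_tail_weight_bounds_le:
  "(\<Sum>k=1..n. (harm n - harm (n - k)) / (real n + 1) + 1 / real n) \<le> 2"
proof -
  have "(\<Sum>k=1..n. (harm n - harm (n - k)) / (real n + 1) + 1 / real n)
      = (\<Sum>k=1..n. harm n - harm (n - k)) / (real n + 1) + (\<Sum>k=1..n. 1 / real n)"
    by (simp only: sum.distrib sum_divide_distrib)
  also have "\<dots> = real n / (real n + 1) + real n / real n"
    unfolding sum_harm_minus_harm_diff by simp
  also have "\<dots> \<le> 2"
    by (cases n) (auto simp: field_simps)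
  finally show ?thesis .
qed

lemma sum_inverse_mult_shift:
  "real k * (\<Sum>s=1..N. 1 / (real s * (real s + real k))) = harm k - (harm (N + k) - harm N)"
proof (induction N)
  case 0
  then show ?case by (simp add: harm_expand(1))
next
  case (Suc N)
  have "real k * (\<Sum>s=1..Suc N. 1 / (real s * (real s + real k)))
      = real k * (\<Sum>s=1..N. 1 / (real s * (real s + real k))) + real k / ((real N + 1) * (real N + 1 + real k))"
    by (simp add: distrib_left add_ac)
  also have "real k / ((real N + 1) * (real N + 1 + real k)) = 1 / (real N + 1) - 1 / (real N + 1 + real k)"
    by (simp add: field_simps)
  finally show ?case
    unfolding Suc.IH by (simp add: harm_Suc inverse_eq_divide add_ac)
qed

lemma sum_inverse_diff_mult_le:
  assumes "1 \<le> k"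
  shows "(\<Sum>l=k+1..n. 1 / ((real l - real k) * real l)) \<le> harm k / real k"
proof -
  have "(\<Sum>l=k+1..n. 1 / ((real l - real k) * real l)) = (\<Sum>s=1..n-k. 1 / (real s * (real s + real k)))"
  proof (cases "k \<le> n")
    case True
    then have "(\<Sum>l=k+1..n. 1 / ((real l - real k) * real l)) = (\<Sum>l=1+k..(n-k)+k. 1 / ((real l - real k) * real l))"
      by (simp add: add.commute)
    also have "\<dots> = (\<Sum>s=1..n-k. 1 / ((real (s + k) - real k) * real (s + k)))"
      by (rule sum.shift_bounds_cl_nat_ivl)
    finally show ?thesis
      by (simp add: add.commute)
  qed simp
  also have "real k * \<dots> \<le> harm k"
    unfolding sum_inverse_mult_shift using harm_mono[of "n - k" "n - k + k"] by simp
  finally show ?thesis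
    using assms by (simp add: pos_le_divide_eq mult.commute)
qed

lemma sum_harm_div_mult_Suc:
  "(\<Sum>k=1..n. harm k / (real k * (real k + 1))) + harm n / real (Suc n) = (\<Sum>k=1..n. 1 / real k ^ 2)"
proof (induction n)
  case 0
  then show ?case by (simp add: harm_expand(1))
next
  case (Suc n)
  define x where "x = real (Suc n)"
  have "0 < x"
    unfolding x_def by simp
  then have "1 / (x * (x + 1)) = 1 / x - 1 / (x + 1)"
    by (simp add: field_simps)
  then have "harm (Suc n) / (x * (x + 1)) + harm (Suc n) / (x + 1) = harm (Suc n) / x"
    by (metis (no_types) diff_add_cancel right_diff_distrib times_divide_eq_right mult.right_neutral)
  also have "\<dots> = harm n / x + 1 / x ^ 2"
  proof -
    have "harm (Suc n) = harm n + 1 / x"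
      unfolding x_def by (simp add: harm_Suc inverse_eq_divide)
    then show ?thesis
      by (simp add: add_divide_distrib power2_eq_square)
  qed
  finally show ?case
    using Suc.IH unfolding x_def by simp
qed

lemma sum_inverse_squares_le: "(\<Sum>k=1..Suc n. 1 / real k ^ 2) \<le> 2 - 1 / real (Suc n)"
proof (induction n)
  case 0
  then show ?case by simp
next
  case (Suc n)
  have "1 / real (Suc (Suc n)) ^ 2 \<le> 1 / (real (Suc n) * real (Suc (Suc n)))"
    unfolding power2_eq_square by (intro divide_left_mono mult_right_mono) auto
  also have "\<dots> = 1 / real (Suc n) - 1 / real (Suc (Suc n))"
    by (simp add: field_simps)
  finally have "1 / real (Suc (Suc n)) ^ 2 \<le> 1 / real (Suc n) - 1 / real (Suc (Suc n))" .
  with Suc.IH show ?case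
    by simp
qed

lemma sum_harm_div_square_le: "(\<Sum>k=1..n. harm k / real k ^ 2) \<le> 4"
proof -
  have squares: "(\<Sum>k=1..n. 1 / real k ^ 2) \<le> 2"
  proof (cases n)
    case (Suc m)
    have "0 \<le> 1 / real (Suc m)"
      by simp
    with sum_inverse_squares_le[of m] show ?thesis
      unfolding Suc by linarith
  qed simp
  have "(\<Sum>k=1..n. harm k / real k ^ 2) \<le> (\<Sum>k=1..n. 2 * (harm k / (real k * (real k + 1))))"
  proof (intro sum_mono)
    fix k assume "k \<in> {1..n}"
    then have "real k * (real k + 1) \<le> 2 * real k ^ 2"
      using mult_right_mono[of 1 "real k" "real k"] by (simp add: power2_eq_square algebra_simps)
    then have "2 * harm k / (2 * real k ^ 2) \<le> 2 * harm k / (real k * (real k + 1))"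
      using \<open>k \<in> {1..n}\<close> harm_nonneg[of k] by (intro divide_left_mono) auto
    then show "harm k / real k ^ 2 \<le> 2 * (harm k / (real k * (real k + 1)))"
      by simp
  qed
  also have "\<dots> = 2 * (\<Sum>k=1..n. harm k / (real k * (real k + 1)))"
    by (simp only: sum_distrib_left)
  also have "\<dots> \<le> 2 * (\<Sum>k=1..n. 1 / real k ^ 2)"
    using sum_harm_div_mult_Suc[of n] divide_nonneg_nonneg[OF harm_nonneg[of n], of "real (Suc n)"]
    by linarith
  also have "\<dots> \<le> 4"
    using squares by simp
  finally show ?thesis .
qed

lemma ln_harm_bound_le:
  fixes c :: real
  assumes "0 \<le> c" "2 \<le> n"
  shows "ln (real n) * (1 + 2 * c^2) + 4 * c^2 * (1 + c * harm n) \<le> (1 + 8 * c^2 + 10 * c^3) * ln (real n)"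
proof -
  define L where "L = ln (real n)"
  have "ln 2 \<le> L"
    unfolding L_def using assms by simp
  then have one: "1 \<le> 3/2 * L"
    using ln2_ge_two_thirds by linarith
  have "c * harm n \<le> c * (1 + L)"
    unfolding L_def using assms harm_le_one_plus_ln[of n] by (intro mult_left_mono) auto
  moreover have "c * 1 \<le> c * (3/2 * L)"
    using assms one by (intro mult_left_mono) auto
  ultimately have "1 + c * harm n \<le> 3/2 * L + 5/2 * c * L"
    using one by (simp add: algebra_simps)
  then have "4 * c^2 * (1 + c * harm n) \<le> 4 * c^2 * (3/2 * L + 5/2 * c * L)"
    by (intro mult_left_mono) auto
  also have "\<dots> = 6 * c^2 * L + 10 * c^3 * L"
    by (simp add: algebra_simps power2_eq_square power3_eq_cube)
  finally show ?thesis
    unfolding L_def[symmetric] by (simp add: algebra_simps)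
qed

section \<open>Expectations under the Feller coupling\<close>

lemma nat_floor_powr_le:
  assumes "1 \<le> n" "t \<le> 1"
  shows "nat \<lfloor>real n powr t\<rfloor> \<le> n"
proof -
  have "real n powr t \<le> real n"
    using powr_mono[OF assms(2), of "real n"] assms(1) by simp
  then show ?thesis
    by (simp add: nat_le_iff floor_le_iff)
qed

locale feller_coupling = prob_space M for M :: "'a measure" +
  fixes \<theta> :: real and \<beta> :: "nat \<Rightarrow> 'a \<Rightarrow> bool"
  assumes theta_pos: "\<theta> > 0"
    and indep_\<beta>: "indep_vars (\<lambda>_. count_space UNIV) \<beta> {1..}"
    and prob_\<beta>: "\<And>j. j \<ge> 1 \<Longrightarrow> prob {\<omega> \<in> space M. \<beta> j \<omega>} = \<theta> / (\<theta> + real j - 1)"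
begin

definition \<kappa> :: real where "\<kappa> = max 1 \<theta>"

lemma one_le_\<kappa>: "1 \<le> \<kappa>"
  unfolding \<kappa>_def by simp

lemma prob_\<beta>_le:
  assumes "1 \<le> j"
  shows "prob {\<omega> \<in> space M. \<beta> j \<omega>} \<le> \<kappa> / real j"
proof (cases "1 \<le> \<theta>")
  case True
  then have "\<theta> / (\<theta> + real j - 1) \<le> \<theta> / real j"
    using assms by (intro divide_left_mono) auto
  then show ?thesis
    using True assms by (simp add: prob_\<beta> \<kappa>_def)
next
  case False
  have "0 \<le> (1 - \<theta>) * (real j - 1)"
    using False assms by (intro mult_nonneg_nonneg) auto
  then have "\<theta> / (\<theta> + real j - 1) \<le> 1 / real j"
    using theta_pos assms by (simp add: field_simps algebra_simps)
  then show ?thesis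
    using False assms by (simp add: prob_\<beta> \<kappa>_def)
qed

text \<open>Position \<open>0\<close> reads as a zero (\<open>\<beta> 0\<close> is not part of the coupling), which makes
  \<open>ones G\<close> an event for every \<open>G\<close>.\<close>
definition ones :: "nat set \<Rightarrow> 'a set" where
  "ones G = {\<omega> \<in> space M. \<forall>j\<in>G. infinite_word (\<lambda>j. \<beta> j \<omega>) j}"

lemma \<beta>_events: "1 \<le> j \<Longrightarrow> {\<omega> \<in> space M. \<beta> j \<omega>} \<in> events"
  using indep_\<beta> unfolding indep_vars_def2 by (auto intro: measurable_sets_Collect)

lemma ones_events[measurable]: "ones G \<in> events"
proof -
  have "{\<omega> \<in> space M. infinite_word (\<lambda>j. \<beta> j \<omega>) j} \<in> events" for j
    using \<beta>_events[of j] by (cases "1 \<le> j") (auto simp: infinite_word_def)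
  then show ?thesis
    unfolding ones_def by (rule sets.sets_Collect_countable_Ball)
qed

lemma indicator_ones:
  "\<omega> \<in> space M \<Longrightarrow> indicator (ones G) \<omega> = of_bool (\<forall>j\<in>G. infinite_word (\<lambda>j. \<beta> j \<omega>) j)"
  unfolding ones_def by simp

lemma prob_ones_le:
  assumes "finite G"
  shows "prob (ones G) \<le> (\<Prod>j\<in>G. \<kappa> / real j)"
proof (cases "0 \<in> G")
  case True
  then have "ones G = {}"
    unfolding ones_def infinite_word_def by auto
  moreover have "(\<Prod>j\<in>G. \<kappa> / real j) = 0"
    using True assms by (intro prod_zero) auto
  ultimately show ?thesis
    by simp
next
  case False
  then have G: "G \<subseteq> {1..}"
    using not_less_eq_eq by auto
  show ?thesis
  proof (cases "G = {}")
    case True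
    then show ?thesis
      by (simp add: ones_def prob_space)
  next
    case nonempty: False
    have "ones G = (\<Inter>j\<in>G. {\<omega> \<in> space M. \<beta> j \<omega>})"
      using G nonempty unfolding ones_def infinite_word_def by auto
    also have "prob \<dots> = (\<Prod>j\<in>G. prob {\<omega> \<in> space M. \<beta> j \<omega>})"
      using indep_eventsI_indep_vars[OF indep_\<beta>, where P = "\<lambda>_ x. x"] assms G nonempty
      unfolding indep_events_def by auto
    also have "\<dots> \<le> (\<Prod>j\<in>G. \<kappa> / real j)"
      using G by (intro prod_mono conjI measure_nonneg prob_\<beta>_le) auto
    finally show ?thesis .
  qed
qed

lemma prob_ones_pair_le:
  assumes "1 \<le> k" "k < l"
  shows "prob (ones {l - k, l}) \<le> \<kappa>^2 / ((real l - real k) * real l)"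
  using prob_ones_le[of "{l - k, l}"] assms by (simp add: of_nat_diff power2_eq_square)

lemma prob_ones_triple_le:
  assumes "1 \<le> k" "k < l" "l + k \<le> l'"
  shows "prob (ones {l - k, l, l' - k})
    \<le> \<kappa>^2 / ((real l - real k) * real l) * (of_bool (l' = l + k) + \<kappa> / real (l' - k))"
proof (cases "l' = l + k")
  case True
  have "prob (ones {l - k, l, l' - k}) \<le> \<kappa>^2 / ((real l - real k) * real l) * 1"
    using prob_ones_pair_le[OF assms(1,2)] True by simp
  also have "\<dots> \<le> \<kappa>^2 / ((real l - real k) * real l) * (1 + \<kappa> / real (l' - k))"
    using assms one_le_\<kappa> by (intro mult_left_mono) auto
  finally show ?thesis
    using True by simp
next
  case False
  then have "l' - k \<noteq> l" "l' - k \<noteq> l - k" "l - k \<noteq> l"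
    using assms by auto
  then show ?thesis
    using prob_ones_le[of "{l - k, l, l' - k}"] assms False by (simp add: of_nat_diff power2_eq_square)
qed

lemma expected_tail_ends_le:
  "(\<Sum>k=1..n. \<Sum>l. of_bool (n < l) * emeasure M (ones {l - k, l})) \<le> ennreal (2 * \<kappa>^2)"
proof -
  define w where "w k = (harm n - harm (n - k)) / (real n + 1) + 1 / real n" for k
  have w_nonneg: "0 \<le> w k" for k
    unfolding w_def using harm_mono[of "n - k" n] by (intro add_nonneg_nonneg divide_nonneg_nonneg) auto
  have "(\<Sum>k=1..n. \<Sum>l. of_bool (n < l) * emeasure M (ones {l - k, l}))
      \<le> (\<Sum>k=1..n. ennreal (\<kappa>^2) * ennreal (w k))"
  proof (intro sum_mono)
    fix k assume k: "k \<in> {1..n}"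
    have "of_bool (n < l) * emeasure M (ones {l - k, l})
        \<le> ennreal (\<kappa>^2) * ennreal (of_bool (n < l) / ((real l - real k) * real l))" for l
    proof (cases "n < l")
      case True
      then have "ennreal (prob (ones {l - k, l})) \<le> ennreal (\<kappa>^2 * (1 / ((real l - real k) * real l)))"
        using prob_ones_pair_le[of k l] k by (intro ennreal_leI) simp
      also have "\<dots> = ennreal (\<kappa>^2) * ennreal (1 / ((real l - real k) * real l))"
        using True k by (intro ennreal_mult) auto
      finally show ?thesis
        using True by (simp add: emeasure_eq_measure)
    qed simp
    then have "(\<Sum>l. of_bool (n < l) * emeasure M (ones {l - k, l}))
        \<le> ennreal (\<kappa>^2) * (\<Sum>l. ennreal (of_bool (n < l) / ((real l - real k) * real l)))"
      unfolding ennreal_suminf_cmult[symmetric] by (intro suminf_le summableI)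
    also have "\<dots> \<le> ennreal (\<kappa>^2) * ennreal (w k)"
      unfolding w_def using k by (intro mult_left_mono suminf_tail_weights_le) auto
    finally show "(\<Sum>l. of_bool (n < l) * emeasure M (ones {l - k, l})) \<le> ennreal (\<kappa>^2) * ennreal (w k)" .
  qed
  also have "\<dots> = (\<Sum>k=1..n. ennreal (\<kappa>^2 * w k))"
    using w_nonneg by (intro sum.cong refl ennreal_mult[symmetric]) auto
  also have "\<dots> = ennreal (\<kappa>^2 * (\<Sum>k=1..n. w k))"
    using w_nonneg by (subst sum_ennreal) (auto simp: sum_distrib_left)
  also have "\<dots> \<le> ennreal (2 * \<kappa>^2)"
    using mult_left_mono[OF sum_tail_weight_bounds_le[of n], of "\<kappa>^2"] unfolding w_def[symmetric]
    by (intro ennreal_leI) (simp add: mult.commute)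
  finally show ?thesis .
qed

lemma expected_spacing_pairs_le:
  assumes "1 \<le> k"
  shows "(\<Sum>l=k+1..n. \<Sum>l'=l+k..n+1. prob (ones {l - k, l, l' - k}))
    \<le> \<kappa>^2 * (1 + \<kappa> * harm n) * (harm k / real k)"
proof -
  have inner: "(\<Sum>l'=l+k..n+1. prob (ones {l - k, l, l' - k}))
      \<le> \<kappa>^2 / ((real l - real k) * real l) * (1 + \<kappa> * harm n)" if "k < l" for l
  proof -
    have "(\<Sum>l'=l+k..n+1. prob (ones {l - k, l, l' - k}))
        \<le> (\<Sum>l'=l+k..n+1. \<kappa>^2 / ((real l - real k) * real l) * (of_bool (l' = l + k) + \<kappa> / real (l' - k)))"
      using assms that by (intro sum_mono prob_ones_triple_le) auto
    also have "\<dots> = \<kappa>^2 / ((real l - real k) * real l)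
        * ((\<Sum>l'=l+k..n+1. of_bool (l' = l + k)) + (\<Sum>l'=l+k..n+1. \<kappa> / real (l' - k)))"
      by (simp only: sum_distrib_left sum.distrib distrib_left)
    also have "\<dots> \<le> \<kappa>^2 / ((real l - real k) * real l) * (1 + \<kappa> * harm n)"
    proof (intro mult_left_mono add_mono)
      show "(\<Sum>l'=l+k..n+1. of_bool (l' = l + k)) \<le> (1 :: real)"
        by (simp add: of_bool_def)
      have "(\<Sum>l'=l+k..n+1. \<kappa> / real (l' - k)) = (\<Sum>j\<in>(\<lambda>l'. l' - k) ` {l+k..n+1}. \<kappa> / real j)"
        by (subst sum.reindex) (auto simp: inj_on_def)
      also have "\<dots> \<le> (\<Sum>j=1..n. \<kappa> / real j)"
        using assms that one_le_\<kappa> by (intro sum_mono2) auto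
      also have "\<dots> = \<kappa> * harm n"
        by (simp add: harm_def sum_distrib_left inverse_eq_divide)
      finally show "(\<Sum>l'=l+k..n+1. \<kappa> / real (l' - k)) \<le> \<kappa> * harm n" .
    qed (use that in auto)
    finally show ?thesis .
  qed
  have "(\<Sum>l=k+1..n. \<Sum>l'=l+k..n+1. prob (ones {l - k, l, l' - k}))
      \<le> (\<Sum>l=k+1..n. \<kappa>^2 / ((real l - real k) * real l) * (1 + \<kappa> * harm n))"
    by (intro sum_mono inner) auto
  also have "\<dots> = \<kappa>^2 * (1 + \<kappa> * harm n) * (\<Sum>l=k+1..n. 1 / ((real l - real k) * real l))"
    by (simp add: sum_distrib_left)
  also have "\<dots> \<le> \<kappa>^2 * (1 + \<kappa> * harm n) * (harm k / real k)"
    using one_le_\<kappa> harm_nonneg[of n]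
    by (intro mult_left_mono sum_inverse_diff_mult_le assms mult_nonneg_nonneg add_nonneg_nonneg) auto
  finally show ?thesis .
qed

lemma expected_spacing_pairs_total_le:
  "(\<Sum>k=1..n. 1 / real k * (\<Sum>l=k+1..n. \<Sum>l'=l+k..n+1. prob (ones {l - k, l, l' - k})))
    \<le> 4 * \<kappa>^2 * (1 + \<kappa> * harm n)"
proof -
  have "(\<Sum>k=1..n. 1 / real k * (\<Sum>l=k+1..n. \<Sum>l'=l+k..n+1. prob (ones {l - k, l, l' - k})))
      \<le> (\<Sum>k=1..n. \<kappa>^2 * (1 + \<kappa> * harm n) * (harm k / real k ^ 2))"
  proof (intro sum_mono)
    fix k assume "k \<in> {1..n}"
    then have "1 / real k * (\<Sum>l=k+1..n. \<Sum>l'=l+k..n+1. prob (ones {l - k, l, l' - k}))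
        \<le> 1 / real k * (\<kappa>^2 * (1 + \<kappa> * harm n) * (harm k / real k))"
      by (intro mult_left_mono expected_spacing_pairs_le) auto
    then show "1 / real k * (\<Sum>l=k+1..n. \<Sum>l'=l+k..n+1. prob (ones {l - k, l, l' - k}))
        \<le> \<kappa>^2 * (1 + \<kappa> * harm n) * (harm k / real k ^ 2)"
      by (simp add: power2_eq_square)
  qed
  also have "\<dots> = \<kappa>^2 * (1 + \<kappa> * harm n) * (\<Sum>k=1..n. harm k / real k ^ 2)"
    by (simp add: sum_distrib_left)
  also have "\<dots> \<le> \<kappa>^2 * (1 + \<kappa> * harm n) * 4"
    using one_le_\<kappa> harm_nonneg[of n]
    by (intro mult_left_mono sum_harm_div_square_le mult_nonneg_nonneg add_nonneg_nonneg) auto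
  finally show ?thesis
    by simp
qed

definition majorant :: "nat \<Rightarrow> 'a \<Rightarrow> ennreal" where
  "majorant n \<omega> =
    ennreal (ln (real n)) * (1 + (\<Sum>k=1..n. \<Sum>l. of_bool (n < l) * indicator (ones {l - k, l}) \<omega>))
    + (\<Sum>k=1..n. ennreal (1 / real k) * (\<Sum>l=k+1..n. \<Sum>l'=l+k..n+1. indicator (ones {l - k, l, l' - k}) \<omega>))"

lemma abs_ln_invol_minus_ln_Bm_le_majorant:
  assumes "\<omega> \<in> space M" "\<beta> 1 \<omega>" "m \<le> n"
  shows "ennreal \<bar>ln (invol m (cyc_counts (\<lambda>j. \<beta> j \<omega>) n)) - ln (Bm m (Z0 (\<lambda>j. \<beta> j \<omega>)))\<bar>
    \<le> majorant n \<omega>"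
  unfolding majorant_def indicator_ones[OF assms(1)]
  using ln_invol_cyc_counts_minus_ln_Bm_Z0_le[of "\<lambda>j. \<beta> j \<omega>", OF assms(2,3)] .

lemma nn_integral_majorant:
  "(\<integral>\<^sup>+\<omega>. majorant n \<omega> \<partial>M) =
    ennreal (ln (real n)) * (1 + (\<Sum>k=1..n. \<Sum>l. of_bool (n < l) * emeasure M (ones {l - k, l})))
    + (\<Sum>k=1..n. ennreal (1 / real k) * (\<Sum>l=k+1..n. \<Sum>l'=l+k..n+1. emeasure M (ones {l - k, l, l' - k})))"
  unfolding majorant_def
  by (simp add: nn_integral_add nn_integral_cmult nn_integral_sum nn_integral_suminf emeasure_space_1
      del: sum.cl_ivl_Suc)

lemma nn_integral_majorant_le:
  "(\<integral>\<^sup>+\<omega>. majorant n \<omega> \<partial>M) \<le> ennreal (ln (real n) * (1 + 2 * \<kappa>^2) + 4 * \<kappa>^2 * (1 + \<kappa> * harm n))"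
proof -
  have ln_n: "0 \<le> ln (real n)"
    by (cases n) auto
  have pairs_nonneg: "0 \<le> 4 * \<kappa>^2 * (1 + \<kappa> * harm n)"
    using one_le_\<kappa> harm_nonneg[of n] by (intro mult_nonneg_nonneg add_nonneg_nonneg) auto
  have "(\<Sum>k=1..n. ennreal (1 / real k) * (\<Sum>l=k+1..n. \<Sum>l'=l+k..n+1. emeasure M (ones {l - k, l, l' - k})))
      = (\<Sum>k=1..n. ennreal (1 / real k * (\<Sum>l=k+1..n. \<Sum>l'=l+k..n+1. prob (ones {l - k, l, l' - k}))))"
  proof (intro sum.cong refl)
    fix k
    have "(\<Sum>l=k+1..n. \<Sum>l'=l+k..n+1. emeasure M (ones {l - k, l, l' - k}))
        = ennreal (\<Sum>l=k+1..n. \<Sum>l'=l+k..n+1. prob (ones {l - k, l, l' - k}))"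
      by (simp add: emeasure_eq_measure sum_ennreal sum_nonneg del: sum.cl_ivl_Suc)
    then show "ennreal (1 / real k) * (\<Sum>l=k+1..n. \<Sum>l'=l+k..n+1. emeasure M (ones {l - k, l, l' - k}))
        = ennreal (1 / real k * (\<Sum>l=k+1..n. \<Sum>l'=l+k..n+1. prob (ones {l - k, l, l' - k})))"
      by (subst ennreal_mult) (auto intro!: sum_nonneg simp del: sum.cl_ivl_Suc)
  qed
  also have "\<dots> = ennreal (\<Sum>k=1..n. 1 / real k * (\<Sum>l=k+1..n. \<Sum>l'=l+k..n+1. prob (ones {l - k, l, l' - k})))"
    by (intro sum_ennreal mult_nonneg_nonneg sum_nonneg) auto
  finally have expected_pairs: "(\<Sum>k=1..n. ennreal (1 / real k)
      * (\<Sum>l=k+1..n. \<Sum>l'=l+k..n+1. emeasure M (ones {l - k, l, l' - k})))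
      = ennreal (\<Sum>k=1..n. 1 / real k * (\<Sum>l=k+1..n. \<Sum>l'=l+k..n+1. prob (ones {l - k, l, l' - k})))" .
  have "(\<integral>\<^sup>+\<omega>. majorant n \<omega> \<partial>M)
      \<le> ennreal (ln (real n)) * (1 + ennreal (2 * \<kappa>^2)) + ennreal (4 * \<kappa>^2 * (1 + \<kappa> * harm n))"
    unfolding nn_integral_majorant expected_pairs
    by (intro add_mono mult_left_mono add_left_mono expected_tail_ends_le ennreal_leI
        expected_spacing_pairs_total_le) auto
  also have "\<dots> = ennreal (ln (real n) * (1 + 2 * \<kappa>^2) + 4 * \<kappa>^2 * (1 + \<kappa> * harm n))"
    using ln_n pairs_nonneg by (simp add: ennreal_mult ennreal_plus)
  finally show ?thesis .
qed

lemma expected_sup_abs_ln_diff_le: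
  assumes "2 \<le> n"
  shows "(\<integral>\<^sup>+ \<omega>. (SUP t\<in>{0..1::real}.
        ennreal \<bar>ln (invol (nat \<lfloor>real n powr t\<rfloor>) (cyc_counts (\<lambda>j. \<beta> j \<omega>) n))
               - ln (Bm (nat \<lfloor>real n powr t\<rfloor>) (Z0 (\<lambda>j. \<beta> j \<omega>)))\<bar>) \<partial>M)
    \<le> ennreal ((1 + 8 * \<kappa>^2 + 10 * \<kappa>^3) * ln (real n))"
    (is "(\<integral>\<^sup>+ \<omega>. ?F \<omega> \<partial>M) \<le> _")
proof -
  have "prob {\<omega> \<in> space M. \<beta> 1 \<omega>} = 1"
    using prob_\<beta>[of 1] theta_pos by simp
  then have "AE \<omega> in M. \<omega> \<in> {\<omega> \<in> space M. \<beta> 1 \<omega>}"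
    by (rule AE_prob_1)
  then have "AE \<omega> in M. ?F \<omega> \<le> majorant n \<omega>"
  proof eventually_elim
    case (elim \<omega>)
    then show ?case
      using assms by (intro SUP_least abs_ln_invol_minus_ln_Bm_le_majorant nat_floor_powr_le) auto
  qed
  then have "(\<integral>\<^sup>+ \<omega>. ?F \<omega> \<partial>M) \<le> (\<integral>\<^sup>+\<omega>. majorant n \<omega> \<partial>M)"
    by (rule nn_integral_mono_AE)
  also have "\<dots> \<le> ennreal (ln (real n) * (1 + 2 * \<kappa>^2) + 4 * \<kappa>^2 * (1 + \<kappa> * harm n))"
    by (rule nn_integral_majorant_le)
  also have "\<dots> \<le> ennreal ((1 + 8 * \<kappa>^2 + 10 * \<kappa>^3) * ln (real n))"
    using one_le_\<kappa> assms by (intro ennreal_leI ln_harm_bound_le) auto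
  finally show ?thesis .
qed

end

theorem lemma5p4:
  fixes M :: "'a measure" and \<theta> :: real and \<beta> :: "nat \<Rightarrow> 'a \<Rightarrow> bool"
  assumes "prob_space M"
    and "\<theta> > 0"
    and "prob_space.indep_vars M (\<lambda>_. count_space UNIV) \<beta> {1..}"
    and "\<And>j. j \<ge> 1 \<Longrightarrow> measure M {\<omega> \<in> space M. \<beta> j \<omega>} = \<theta> / (\<theta> + real j - 1)"
  shows "\<exists>C. \<forall>n\<ge>2.
    (\<integral>\<^sup>+ \<omega>. (SUP t\<in>{0..1::real}.
        ennreal \<bar>ln (invol (nat \<lfloor>real n powr t\<rfloor>) (cyc_counts (\<lambda>j. \<beta> j \<omega>) n))
               - ln (Bm (nat \<lfloor>real n powr t\<rfloor>) (Z0 (\<lambda>j. \<beta> j \<omega>)))\<bar>) \<partial>M)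
      \<le> ennreal (C * ln (real n))"
proof -
  interpret feller_coupling M \<theta> \<beta>
    using assms by (simp add: feller_coupling_def feller_coupling_axioms_def)
  show ?thesis
    using expected_sup_abs_ln_diff_le by blast
qed

end
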